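(* Let $\mathcal{G}_R(\mathcal{N}_R,\mathcal{E}_R)$ be an R-graph rooted at $n_{dst}$ with ingress points $\mathcal{M}$, and let $\mathcal{G}'_R$ be the graph obtained from it by the shortest-path transformation described in the context. Let $f$ and $f'$ be the certain routing functions computed on $\mathcal{G}_R$ and $\mathcal{G}'_R$ respectively. Then $\{i\in\mathcal{N}_R: f(i)\neq 0\}\subseteq\{i\in\mathcal{N}_R: f'(i)\neq 0\}$, i.e., applying the transformation can only increase (not decrease) the set of nodes with certain routes.
   Context: An R-graph is a directed acyclic graph $\mathcal{G}_R(\mathcal{N}_R,\mathcal{E}_R)$ rooted at a destination node $n_{dst}$; an edge $j\to i$ means $i$ may use the routing path learned from its parent $j$; $P_i=\{j:e_{ji}\in\mathcal{E}_R\}$. $n_{dst}$ has a finite set $\mathcal{M}$ of ingress points, and each child of $n_{dst}$ is attached to exactly one ingress point. Certain routing function $f:\mathcal{N}_R\to\mathcal{M}\cup\{0\}$ on a given R-graph: for children $i$ of $n_{dst}$, $f(i)$ is their ingress point; visiting the remaining nodes (other than $n_{dst}$) in a topological order, let $CR_i=\{f(j):j\in P_i\}$; set $f(i)=0$ if $0\in CR_i$ or $|CR_i|\neq 1$, and otherwise set $f(i)$ to the unique element of $CR_i$. Shortest-path transformation: set $L_{n_{dst}}=0$ and $L_i=\infty$ for all other nodes; visiting the nodes other than $n_{dst}$ in a topological order, set $L_i=\min\{L_i,\min_{j\in P_i}(L_j+1)\}$ and then remove from $\mathcal{E}_R$ every edge $j\to i$ with $L_j+1>L_i$. *)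

theory Defs
  imports Main "HOL-Library.Extended_Nat"
begin

text \<open>Nodes have type 'a; an edge (j, i) \<in> E means j \<rightarrow> i (i may use the path learned from parent j).
  Ingress points are positive naturals (0 encodes "no certain route").\<close>

definition parents :: "('a \<times> 'a) set \<Rightarrow> 'a \<Rightarrow> 'a set" where
  "parents E i = {j. (j, i) \<in> E}"

definition rgraph :: "'a set \<Rightarrow> ('a \<times> 'a) set \<Rightarrow> 'a \<Rightarrow> nat set \<Rightarrow> ('a \<Rightarrow> nat) \<Rightarrow> bool" where
  "rgraph N E dst M ing \<longleftrightarrow>
     finite N \<and> dst \<in> N \<and> E \<subseteq> N \<times> N \<and> acyclic E \<and>
     (\<forall>i\<in>N. (dst, i) \<in> E\<^sup>*) \<and>
     finite M \<and> 0 \<notin> M \<and> (\<forall>i. (dst, i) \<in> E \<longrightarrow> ing i \<in> M)"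

definition topo_order :: "'a set \<Rightarrow> ('a \<times> 'a) set \<Rightarrow> 'a \<Rightarrow> 'a list \<Rightarrow> bool" where
  "topo_order N E dst ord \<longleftrightarrow>
     distinct ord \<and> set ord = N - {dst} \<and>
     (\<forall>a b. a < length ord \<longrightarrow> b < length ord \<longrightarrow> (ord ! a, ord ! b) \<in> E \<longrightarrow> a < b)"

definition routing_step :: "('a \<times> 'a) set \<Rightarrow> 'a \<Rightarrow> 'a \<Rightarrow> ('a \<Rightarrow> nat) \<Rightarrow> ('a \<Rightarrow> nat)" where
  "routing_step E dst i f =
     (if (dst, i) \<in> E then f
      else (let CR = f ` parents E i in
            if 0 \<in> CR \<or> card CR \<noteq> 1 then f(i := 0) else f(i := the_elem CR)))"

definition routing :: "('a \<times> 'a) set \<Rightarrow> 'a \<Rightarrow> ('a \<Rightarrow> nat) \<Rightarrow> 'a list \<Rightarrow> 'a \<Rightarrow> nat" where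
  "routing E dst ing ord =
     fold (routing_step E dst) ord (\<lambda>i. if (dst, i) \<in> E then ing i else 0)"

definition sp_step :: "'a \<Rightarrow> ('a \<Rightarrow> enat) \<times> ('a \<times> 'a) set \<Rightarrow> ('a \<Rightarrow> enat) \<times> ('a \<times> 'a) set" where
  "sp_step i st =
     (let L = fst st; E = snd st;
          L' = L(i := min (L i) (INF j\<in>parents E i. L j + 1))
      in (L', E - {(j, i) | j. (j, i) \<in> E \<and> L' j + 1 > L' i}))"

definition sp_transform :: "('a \<times> 'a) set \<Rightarrow> 'a \<Rightarrow> 'a list \<Rightarrow> ('a \<times> 'a) set" where
  "sp_transform E dst ord =
     snd (fold sp_step ord (\<lambda>i. if i = dst then 0 else \<infinity>, E))"

end

theory Submission imports Defs begin

text \<open>When the shortest-path step visits a node whose label is still \<open>\<infinity>\<close>, its new label is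
  the minimum of \<open>L j + 1\<close> over its parents, so every minimising parent keeps its edge; in
  particular the root, with label 0, keeps its edges to its children. Hence the transformed graph
  only loses edges, every non-root node keeps a parent, and the children of the root stay children
  of the root. The routing function \<open>f\<close> of the original graph and \<open>f'\<close> of the transformed
  one are fixpoints of the certain-route rule on the respective graphs, and by well-founded
  induction along the edges a node with \<open>f i \<noteq> 0\<close> has all its surviving parents certain with the
  same ingress point, so \<open>f' i = f i\<close>.\<close>

lemma sp_step_edges_subset: "snd (sp_step x st) \<subseteq> snd st"
  by (auto simp: sp_step_def Let_def)

lemma sp_step_untouched:
  assumes "k \<noteq> x"
  shows "fst (sp_step x st) k = fst st k" "parents (snd (sp_step x st)) k = parents (snd st) k"
  using assms by (auto simp: sp_step_def Let_def parents_def)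

lemma sp_step_keeps_parent:
  assumes "L x = \<infinity>" "finite (parents E x)" "parents E x \<noteq> {}" "x \<notin> parents E x"
  shows "parents (snd (sp_step x (L, E))) x \<noteq> {}"
proof -
  let ?S = "(\<lambda>j. L j + 1) ` parents E x"
  have fin: "finite ?S" "?S \<noteq> {}" using assms(2,3) by auto
  obtain j where j: "j \<in> parents E x" and jmin: "L j + 1 = Min ?S"
    using Min_in[OF fin] by auto
  have "(INF j\<in>parents E x. L j + 1) = L j + 1" using cInf_eq_Min[OF fin] jmin by simp
  moreover have "j \<noteq> x" using j assms(4) by blast
  ultimately have "j \<in> parents (snd (sp_step x (L, E))) x"
    using j assms(1) by (auto simp: sp_step_def Let_def parents_def)
  then show ?thesis by blast
qed

lemma sp_step_keeps_root_edge:
  assumes "L x = \<infinity>" "L dst = 0" "dst \<in> parents E x"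
  shows "dst \<in> parents (snd (sp_step x (L, E))) x"
proof -
  have "(1::enat) \<le> (INF j\<in>parents E x. L j + 1)"
    by (rule INF_greatest) (simp add: ileI1 one_eSuc plus_1_eSuc(2))
  moreover have "x \<noteq> dst" using assms(1,2) by auto
  ultimately show ?thesis using assms by (auto simp: sp_step_def Let_def parents_def)
qed

lemma fold_sp_step_edges_subset: "snd (fold sp_step xs st) \<subseteq> snd st"
  by (induction xs arbitrary: st) (use sp_step_edges_subset in fastforce)+

lemma fold_sp_step_untouched:
  assumes "k \<notin> set xs"
  shows "fst (fold sp_step xs st) k = fst st k"
    "parents (snd (fold sp_step xs st)) k = parents (snd st) k"
  using assms by (induction xs arbitrary: st) (auto simp: sp_step_untouched)

lemma sp_transform_visit:
  assumes "distinct ord" "dst \<notin> set ord" "x \<in> set ord"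
  obtains L E\<^sub>0 where "L x = \<infinity>" "L dst = 0" "parents E\<^sub>0 x = parents E x"
    "parents (sp_transform E dst ord) x = parents (snd (sp_step x (L, E\<^sub>0))) x"
proof -
  obtain as bs where ord: "ord = as @ x # bs" using split_list[OF assms(3)] by blast
  have x: "x \<notin> set as" "x \<notin> set bs" "x \<noteq> dst" using assms ord by auto
  have dst: "dst \<notin> set as" using assms(2) ord by simp
  define st0 where "st0 = ((\<lambda>i. if i = dst then 0 else \<infinity>) :: 'a \<Rightarrow> enat, E)"
  define st where "st = fold sp_step as st0"
  have "sp_transform E dst ord = snd (fold sp_step bs (sp_step x st))"
    by (simp add: sp_transform_def ord st_def st0_def)
  then have "parents (sp_transform E dst ord) x = parents (snd (sp_step x (fst st, snd st))) x"
    using fold_sp_step_untouched(2)[OF x(2)] by simp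
  moreover have "fst st x = \<infinity>" "fst st dst = 0" "parents (snd st) x = parents E x"
    using fold_sp_step_untouched[OF x(1)] fold_sp_step_untouched(1)[OF dst] x(3)
    by (simp_all add: st_def st0_def)
  ultimately show ?thesis using that by blast
qed

lemma sp_transform_subset: "sp_transform E dst ord \<subseteq> E"
  using fold_sp_step_edges_subset by (fastforce simp: sp_transform_def)

lemma sp_transform_keeps_parent:
  assumes "distinct ord" "dst \<notin> set ord" "x \<in> set ord"
    and "finite (parents E x)" "parents E x \<noteq> {}" "x \<notin> parents E x"
  shows "parents (sp_transform E dst ord) x \<noteq> {}"
proof -
  obtain L E\<^sub>0 where L: "L x = \<infinity>" and E\<^sub>0: "parents E\<^sub>0 x = parents E x"
    and visit: "parents (sp_transform E dst ord) x = parents (snd (sp_step x (L, E\<^sub>0))) x"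
    using sp_transform_visit[OF assms(1-3)] .
  show ?thesis unfolding visit using sp_step_keeps_parent[of L x, OF L] assms(4-6) E\<^sub>0 by simp
qed

lemma sp_transform_keeps_root_edge:
  assumes "distinct ord" "dst \<notin> set ord" "x \<in> set ord" "(dst, x) \<in> E"
  shows "(dst, x) \<in> sp_transform E dst ord"
proof -
  obtain L E\<^sub>0 where L: "L x = \<infinity>" "L dst = 0" and E\<^sub>0: "parents E\<^sub>0 x = parents E x"
    and visit: "parents (sp_transform E dst ord) x = parents (snd (sp_step x (L, E\<^sub>0))) x"
    using sp_transform_visit[OF assms(1-3)] .
  have "dst \<in> parents E\<^sub>0 x" using assms(4) E\<^sub>0 by (simp add: parents_def)
  then have "dst \<in> parents (sp_transform E dst ord) x"
    unfolding visit by (rule sp_step_keeps_root_edge[of L x dst, OF L])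
  then show ?thesis by (simp add: parents_def)
qed

definition certain_route :: "('a \<times> 'a) set \<Rightarrow> 'a \<Rightarrow> ('a \<Rightarrow> nat) \<Rightarrow> ('a \<Rightarrow> nat) \<Rightarrow> 'a \<Rightarrow> nat" where
  "certain_route E dst ing f i =
     (if (dst, i) \<in> E then ing i
      else (let CR = f ` parents E i in if 0 \<in> CR \<or> card CR \<noteq> 1 then 0 else the_elem CR))"

lemma fold_routing_step_untouched: "k \<notin> set xs \<Longrightarrow> fold (routing_step E dst) xs f k = f k"
  by (induction xs arbitrary: f) (auto simp: routing_step_def Let_def)

lemma topo_order_set: "topo_order N E dst ord \<Longrightarrow> set ord = N - {dst}"
  and topo_order_distinct: "topo_order N E dst ord \<Longrightarrow> distinct ord"
  by (simp_all add: topo_order_def)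

lemma topo_order_parent_before:
  assumes "topo_order N E dst ord" "ord = as @ i # bs" "(j, i) \<in> E" "j \<in> set ord"
  shows "j \<in> set as"
proof (rule ccontr)
  assume "j \<notin> set as"
  then obtain t where t: "t < length (i # bs)" "(i # bs) ! t = j"
    using assms(2,4) by (metis Un_iff in_set_conv_nth set_append)
  have "ord ! (length as + t) = j" "ord ! length as = i"
    using t assms(2) by (simp_all add: nth_append)
  moreover have "length as + t < length ord" "length as < length ord" using t assms(2) by auto
  ultimately have "length as + t < length as" using assms(1,3) unfolding topo_order_def by blast
  then show False by simp
qed

text \<open>Any topological order yields the same fixpoint.\<close>

lemma routing_fixpoint:
  assumes "topo_order N E dst ord" "E \<subseteq> N \<times> N" "i \<in> set ord"
  shows "routing E dst ing ord i = certain_route E dst ing (routing E dst ing ord) i"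
proof -
  obtain as bs where ord: "ord = as @ i # bs" using split_list[OF assms(3)] by blast
  have dist: "distinct ord" using topo_order_distinct[OF assms(1)] .
  define f0 where "f0 = (\<lambda>i. if (dst, i) \<in> E then ing i else 0)"
  define f where "f = fold (routing_step E dst) as f0"
  have r: "routing E dst ing ord = fold (routing_step E dst) bs (routing_step E dst i f)"
    by (simp add: routing_def ord f_def f0_def)
  have i: "i \<notin> set as" "i \<notin> set bs" using dist ord by auto
  have ri: "routing E dst ing ord i = routing_step E dst i f i"
    using r fold_routing_step_untouched[OF i(2)] by simp
  have fi: "f i = f0 i" using fold_routing_step_untouched[OF i(1)] by (simp add: f_def)
  show ?thesis
  proof (cases "(dst, i) \<in> E")
    case True
    then show ?thesis using ri fi by (simp add: routing_step_def certain_route_def f0_def)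
  next
    case False
    have "routing E dst ing ord j = f j" if "j \<in> parents E i" for j
    proof -
      have ji: "(j, i) \<in> E" using that by (simp add: parents_def)
      then have "j \<in> set ord" using assms(2) False topo_order_set[OF assms(1)] by auto
      then have "j \<notin> set (i # bs)"
        using topo_order_parent_before[OF assms(1) ord ji] dist ord by auto
      then show ?thesis
        using r fold_routing_step_untouched[of j bs] by (auto simp: routing_step_def Let_def)
    qed
    then have "routing E dst ing ord ` parents E i = f ` parents E i" by auto
    then show ?thesis using ri False by (simp add: routing_step_def certain_route_def Let_def)
  qed
qed

lemma certain_route_preserved:
  assumes "wf E" "E \<subseteq> N \<times> N" "E' \<subseteq> E"
    and root_edges: "\<And>i. (dst, i) \<in> E \<Longrightarrow> (dst, i) \<in> E'"
    and has_parent: "\<And>i. i \<in> N \<Longrightarrow> i \<noteq> dst \<Longrightarrow> parents E' i \<noteq> {}"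
    and "f dst = 0"
    and f: "\<And>i. i \<in> N \<Longrightarrow> i \<noteq> dst \<Longrightarrow> f i = certain_route E dst ing f i"
    and f': "\<And>i. i \<in> N \<Longrightarrow> i \<noteq> dst \<Longrightarrow> f' i = certain_route E' dst ing f' i"
  shows "i \<in> N \<Longrightarrow> f i \<noteq> 0 \<Longrightarrow> f' i = f i"
proof (induction i rule: wf_induct_rule[OF \<open>wf E\<close>])
  case (1 i)
  have i: "i \<noteq> dst" using 1(3) \<open>f dst = 0\<close> by auto
  show ?case
  proof (cases "(dst, i) \<in> E")
    case True
    then show ?thesis using f[OF 1(2) i] f'[OF 1(2) i] root_edges
      by (simp add: certain_route_def)
  next
    case False
    then have "(dst, i) \<notin> E'" using \<open>E' \<subseteq> E\<close> by blast
    obtain c where c: "f ` parents E i = {c}" "c \<noteq> 0" "f i = c"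
      using f[OF 1(2) i] 1(3) False
      by (auto simp: certain_route_def Let_def card_1_singleton_iff split: if_splits)
    have "f' j = c" if "j \<in> parents E' i" for j
    proof -
      have ji: "(j, i) \<in> E" using that \<open>E' \<subseteq> E\<close> by (auto simp: parents_def)
      then have "f j = c" "j \<in> N" using c(1) \<open>E \<subseteq> N \<times> N\<close> by (auto simp: parents_def)
      then show ?thesis using 1(1)[OF ji] c(2) by simp
    qed
    then have "f' ` parents E' i = {c}" using has_parent[OF 1(2) i] by blast
    then show ?thesis using f'[OF 1(2) i] \<open>(dst, i) \<notin> E'\<close> c by (simp add: certain_route_def)
  qed
qed

lemma routing_root:
  assumes "topo_order N E dst ord" "(dst, dst) \<notin> E"
  shows "routing E dst ing ord dst = 0"
  using fold_routing_step_untouched[of dst ord] topo_order_set[OF assms(1)] assms(2)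
  by (simp add: routing_def)

lemma finite_parents: "finite E \<Longrightarrow> finite (parents E i)"
  by (rule finite_subset[of _ "fst ` E"]) (force simp: parents_def)+

lemma rgraph_finite_edges: "rgraph N E dst M ing \<Longrightarrow> finite E"
  unfolding rgraph_def by (meson finite_SigmaI finite_subset)

lemma rgraph_no_loop: "rgraph N E dst M ing \<Longrightarrow> (i, i) \<notin> E"
  by (auto simp: rgraph_def acyclic_def)

lemma rgraph_has_parent:
  assumes "rgraph N E dst M ing" "i \<in> N" "i \<noteq> dst"
  shows "parents E i \<noteq> {}"
proof -
  have "(dst, i) \<in> E\<^sup>+" using assms by (auto simp: rgraph_def dest: rtranclD)
  then show ?thesis by (auto simp: parents_def dest: tranclD2)
qed

lemma rgraph_sp_transform_keeps_parent:
  assumes "rgraph N E dst M ing" "topo_order N E dst ord" "i \<in> N" "i \<noteq> dst"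
  shows "parents (sp_transform E dst ord) i \<noteq> {}"
proof (rule sp_transform_keeps_parent[OF topo_order_distinct[OF assms(2)]])
  show "dst \<notin> set ord" "i \<in> set ord" using assms(3,4) topo_order_set[OF assms(2)] by auto
  show "finite (parents E i)" using finite_parents[OF rgraph_finite_edges[OF assms(1)]] .
  show "parents E i \<noteq> {}" using rgraph_has_parent[OF assms(1,3,4)] .
  show "i \<notin> parents E i" using rgraph_no_loop[OF assms(1)] by (simp add: parents_def)
qed

lemma rgraph_sp_transform_keeps_root_edge:
  assumes "rgraph N E dst M ing" "topo_order N E dst ord" "(dst, i) \<in> E"
  shows "(dst, i) \<in> sp_transform E dst ord"
proof (rule sp_transform_keeps_root_edge[OF topo_order_distinct[OF assms(2)] _ _ assms(3)])
  have "E \<subseteq> N \<times> N" "i \<noteq> dst" using assms(1,3) rgraph_no_loop[OF assms(1)]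
    by (auto simp: rgraph_def)
  then show "dst \<notin> set ord" "i \<in> set ord" using assms(3) topo_order_set[OF assms(2)] by auto
qed

theorem theorem3p4:
  fixes N :: "'a set" and E :: "('a \<times> 'a) set" and dst :: 'a
    and M :: "nat set" and ing :: "'a \<Rightarrow> nat"
    and ord1 ord2 ord3 :: "'a list"
  assumes "rgraph N E dst M ing"
    and "topo_order N E dst ord1"
    and "topo_order N E dst ord2"
    and "topo_order N (sp_transform E dst ord2) dst ord3"
  shows "{i \<in> N. routing E dst ing ord1 i \<noteq> 0}
         \<subseteq> {i \<in> N. routing (sp_transform E dst ord2) dst ing ord3 i \<noteq> 0}"
proof -
  let ?E' = "sp_transform E dst ord2"
  let ?f = "routing E dst ing ord1" and ?f' = "routing ?E' dst ing ord3"
  have E: "E \<subseteq> N \<times> N" "wf E"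
    using assms(1) finite_acyclic_wf[OF rgraph_finite_edges[OF assms(1)]] by (simp_all add: rgraph_def)
  have E': "?E' \<subseteq> E" "?E' \<subseteq> N \<times> N" using sp_transform_subset[of E dst ord2] E(1) by blast+
  have "?f dst = 0" using routing_root[OF assms(2) rgraph_no_loop[OF assms(1)]] .
  moreover have "?f i = certain_route E dst ing ?f i" if "i \<in> N" "i \<noteq> dst" for i
    using routing_fixpoint[OF assms(2) E(1)] topo_order_set[OF assms(2)] that by blast
  moreover have "?f' i = certain_route ?E' dst ing ?f' i" if "i \<in> N" "i \<noteq> dst" for i
    using routing_fixpoint[OF assms(4) E'(2)] topo_order_set[OF assms(4)] that by blast
  ultimately have "?f' i = ?f i" if "i \<in> N" "?f i \<noteq> 0" for i
    using certain_route_preserved[where f = ?f and f' = ?f', OF E(2,1) E'(1)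
        rgraph_sp_transform_keeps_root_edge[OF assms(1,3)]
        rgraph_sp_transform_keeps_parent[OF assms(1,3)]] that by blast
  then show ?thesis by auto
qed

end
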